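(* Let $\mathcal{G}$ be an undirected weighted graph (nonzero real weights, possibly negative) with $c$ connected components, and suppose $L(\mathcal{G})$ has $n_+$ positive, $n_-$ negative and $n_0$ zero eigenvalues. Then for any spanning forest $\mathcal{F}$ with cycle subgraph $\mathcal{C}$, the symmetric matrix $R_{(\mathcal{F},\mathcal{C})}WR_{(\mathcal{F},\mathcal{C})}^T$ has $n_+$ positive, $n_-$ negative and $n_0-c$ zero eigenvalues.
   Context: A weighted graph $\mathcal{G}=(\mathcal{V},\mathcal{E},\mathcal{W})$ has weights $\mathcal{W}:\mathcal{E}\to\mathbb{R}\setminus\{0\}$ collected in the diagonal matrix $W$. With an arbitrary edge orientation, the incidence matrix $E$ has in the column of edge $(i,j)$ entry $+1$ in row $i$, $-1$ in row $j$, $0$ elsewhere; $L(\mathcal{G})=EWE^T$. A spanning forest $\mathcal{F}$ is an acyclic subgraph containing a spanning tree of each component; $\mathcal{C}$ consists of the remaining edges; edges ordered so $E=[E_{\mathcal{F}}\ E_{\mathcal{C}}]$ and $W$ correspondingly. $L_e(\mathcal{F})=E_{\mathcal{F}}^TE_{\mathcal{F}}$ and $R_{(\mathcal{F},\mathcal{C})}=[\,I\ \ L_e(\mathcal{F})^{-1}E_{\mathcal{F}}^TE_{\mathcal{C}}\,]$. *)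

theory Defs
  imports "Jordan_Normal_Form.Char_Poly" "Jordan_Normal_Form.Gauss_Jordan_Elimination"
begin

text \<open>Vertices are 0,...,n-1. Edges are given as a list of ordered pairs (i,j);
  the pair order is the (arbitrary) orientation. Weights are a list of the same length.\<close>

definition adj :: "(nat \<times> nat) list \<Rightarrow> (nat \<times> nat) set" where
  "adj es = {(i, j). (i, j) \<in> set es \<or> (j, i) \<in> set es}"

definition conn_rel :: "nat \<Rightarrow> (nat \<times> nat) list \<Rightarrow> (nat \<times> nat) set" where
  "conn_rel n es = {(u, v). u < n \<and> v < n \<and> (u, v) \<in> (adj es)\<^sup>*}"

definition num_components :: "nat \<Rightarrow> (nat \<times> nat) list \<Rightarrow> nat" where
  "num_components n es = card ({0..<n} // conn_rel n es)"

definition has_cycle :: "(nat \<times> nat) list \<Rightarrow> bool" where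
  "has_cycle es = (\<exists>vs. length vs \<ge> 3 \<and> distinct vs \<and>
      (\<forall>i < length vs. (vs ! i, vs ! ((i + 1) mod length vs)) \<in> adj es))"

definition simple_graph :: "nat \<Rightarrow> (nat \<times> nat) list \<Rightarrow> bool" where
  "simple_graph n es = ((\<forall>e \<in> set es. fst e < n \<and> snd e < n \<and> fst e \<noteq> snd e)
      \<and> distinct (map (\<lambda>(i, j). {i, j}) es))"

definition spanning_forest_prefix :: "nat \<Rightarrow> (nat \<times> nat) list \<Rightarrow> nat \<Rightarrow> bool" where
  "spanning_forest_prefix n es k = (k \<le> length es \<and> \<not> has_cycle (take k es)
      \<and> conn_rel n (take k es) = conn_rel n es)"

definition incidence :: "nat \<Rightarrow> (nat \<times> nat) list \<Rightarrow> real mat" where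
  "incidence n es = mat n (length es) (\<lambda>(i, j).
      if fst (es ! j) = i then 1 else if snd (es ! j) = i then -1 else 0)"

definition weight_mat :: "real list \<Rightarrow> real mat" where
  "weight_mat w = mat (length w) (length w) (\<lambda>(i, j). if i = j then w ! i else 0)"

definition laplacian :: "nat \<Rightarrow> (nat \<times> nat) list \<Rightarrow> real list \<Rightarrow> real mat" where
  "laplacian n es w = incidence n es * weight_mat w * transpose_mat (incidence n es)"

definition R_mat :: "nat \<Rightarrow> (nat \<times> nat) list \<Rightarrow> nat \<Rightarrow> real mat" where
  "R_mat n es k = (let EF = incidence n (take k es); EC = incidence n (drop k es);
      Le = transpose_mat EF * EF;
      X = the (mat_inverse Le) * transpose_mat EF * EC
    in mat k (length es) (\<lambda>(i, j). if j < k then (if i = j then 1 else 0) else X $$ (i, j - k)))"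

definition num_pos_eigs :: "real mat \<Rightarrow> nat" where
  "num_pos_eigs A = (\<Sum>x \<in> {x. x > 0 \<and> poly (char_poly A) x = 0}. order x (char_poly A))"

definition num_neg_eigs :: "real mat \<Rightarrow> nat" where
  "num_neg_eigs A = (\<Sum>x \<in> {x. x < 0 \<and> poly (char_poly A) x = 0}. order x (char_poly A))"

definition num_zero_eigs :: "real mat \<Rightarrow> nat" where
  "num_zero_eigs A = order 0 (char_poly A)"

end

theory Submission
  imports Defs
begin

text \<open>With \<open>E = [E\<^sub>F E\<^sub>C]\<close>, every cycle edge is the signed sum of the forest edges on the
  forest path between its ends, so \<open>E\<^sub>C = E\<^sub>F X\<close> and \<open>E = E\<^sub>F R\<close> with \<open>X = L\<^sub>e(F)\<^sup>-\<^sup>1 E\<^sub>F\<^sup>T E\<^sub>C\<close>.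
  Hence \<open>L = E W E\<^sup>T = E\<^sub>F (R W R\<^sup>T) E\<^sub>F\<^sup>T\<close>. The forest columns \<open>E\<^sub>F\<close> are linearly independent,
  and a congruence by an \<open>n \<times> k\<close> matrix of full column rank preserves the numbers of positive and
  negative eigenvalues of a symmetric matrix (Sylvester's law of inertia, which we derive from the
  spectral theorem) while adding \<open>n - k\<close> zero eigenvalues. A forest with \<open>k\<close> edges on \<open>n\<close>
  vertices has \<open>n - k\<close> components, and these are the \<open>c\<close> components of the graph.\<close>

section \<open>Orthogonal diagonalization of real symmetric matrices\<close>

lemma index_mult_mat_sum:
  assumes "A \<in> carrier_mat nr n" "B \<in> carrier_mat n nc" "i < nr" "j < nc"
  shows "(A * B) $$ (i, j) = (\<Sum>l<n. A $$ (i, l) * B $$ (l, j))"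
  using assms by (auto simp: scalar_prod_def lessThan_atLeast0 intro!: sum.cong)

lemma index_mult_mat_vec_sum:
  assumes "A \<in> carrier_mat nr n" "v \<in> carrier_vec n" "i < nr"
  shows "(A *\<^sub>v v) $ i = (\<Sum>l<n. A $$ (i, l) * v $ l)"
  using assms by (auto simp: scalar_prod_def lessThan_atLeast0 intro!: sum.cong)

lemma nonzero_vec_index:
  assumes "v \<in> carrier_vec n" "v \<noteq> 0\<^sub>v n"
  obtains i where "i < n" "v $ i \<noteq> 0"
  using assms by (metis eq_vecI carrier_vecD index_zero_vec)

text \<open>\<open>weight_mat d\<close> serves as the diagonal matrix \<open>diag d\<close> throughout, not only for weights.\<close>

lemma weight_mat_carrier [simp]: "weight_mat d \<in> carrier_mat (length d) (length d)"
  unfolding weight_mat_def by auto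

lemma transpose_weight_mat [simp]: "transpose_mat (weight_mat d) = weight_mat d"
  unfolding weight_mat_def by (intro eq_matI) auto

lemma weight_mat_mult_vec:
  assumes "v \<in> carrier_vec (length d)"
  shows "weight_mat d *\<^sub>v v = vec (length d) (\<lambda>i. d ! i * v $ i)"
proof (intro eq_vecI)
  fix i assume "i < dim_vec (vec (length d) (\<lambda>i. d ! i * v $ i))"
  then have i: "i < length d" by simp
  have "(weight_mat d *\<^sub>v v) $ i = (\<Sum>l<length d. (if i = l then d ! i else 0) * v $ l)"
    using index_mult_mat_vec_sum[OF weight_mat_carrier assms i] i
    by (auto simp: weight_mat_def intro!: sum.cong)
  also have "\<dots> = d ! i * v $ i"
    using i by (simp add: if_distrib[of "\<lambda>x. x * _"] cong: if_cong)
  finally show "(weight_mat d *\<^sub>v v) $ i = vec (length d) (\<lambda>i. d ! i * v $ i) $ i"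
    using i by simp
qed (use assms in \<open>auto simp: weight_mat_def\<close>)

lemma weight_mat_Cons:
  "weight_mat (e # d) =
     four_block_mat (weight_mat [e]) (0\<^sub>m 1 (length d)) (0\<^sub>m (length d) 1) (weight_mat d)"
  unfolding weight_mat_def by (intro eq_matI) (auto simp: nth_Cons')

lemma char_poly_weight_mat: "char_poly (weight_mat d) = (\<Prod>a\<leftarrow>d. [:- a, 1:])"
proof -
  have "char_poly (weight_mat d) = (\<Prod>a\<leftarrow>diag_mat (weight_mat d). [:- a, 1:])"
    by (rule char_poly_upper_triangular[OF weight_mat_carrier])
      (auto simp: upper_triangular_def weight_mat_def)
  also have "diag_mat (weight_mat d) = d"
    unfolding diag_mat_def weight_mat_def by (intro nth_equalityI) auto
  finally show ?thesis .
qed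

text \<open>Square matrices with orthonormal columns (the library's \<open>orthogonal_mat\<close> only
  asks the columns to be pairwise orthogonal).\<close>
definition orthogonal_matrix :: "nat \<Rightarrow> 'a :: field mat \<Rightarrow> bool" where
  "orthogonal_matrix n U \<longleftrightarrow> U \<in> carrier_mat n n \<and> transpose_mat U * U = 1\<^sub>m n"

lemma orthogonal_matrixD:
  assumes "orthogonal_matrix n U"
  shows "U \<in> carrier_mat n n" "transpose_mat U * U = 1\<^sub>m n" "U * transpose_mat U = 1\<^sub>m n"
  using assms mat_mult_left_right_inverse[of "transpose_mat U" n U]
  unfolding orthogonal_matrix_def by auto

lemma orthogonal_matrix_one: "orthogonal_matrix n (1\<^sub>m n)"
  unfolding orthogonal_matrix_def by simp

lemma orthogonal_matrix_mult:
  assumes U: "orthogonal_matrix n U" and V: "orthogonal_matrix n V"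
  shows "orthogonal_matrix n (U * V)"
proof -
  note U' = orthogonal_matrixD[OF U] and V' = orthogonal_matrixD[OF V]
  have "transpose_mat (U * V) * (U * V) = transpose_mat V * (transpose_mat U * U) * V"
    using U'(1) V'(1) by (simp add: transpose_mult assoc_mult_mat[of _ n n _ n _ n])
  then show ?thesis
    using U' V' unfolding orthogonal_matrix_def by simp
qed

lemma orthogonal_matrix_bordered:
  assumes "orthogonal_matrix n U"
  shows "orthogonal_matrix (Suc n) (four_block_mat (1\<^sub>m 1) (0\<^sub>m 1 n) (0\<^sub>m n 1) U)"
proof -
  note U = orthogonal_matrixD[OF assms]
  have "transpose_mat (four_block_mat (1\<^sub>m 1) (0\<^sub>m 1 n) (0\<^sub>m n 1) U)
      * four_block_mat (1\<^sub>m 1) (0\<^sub>m 1 n) (0\<^sub>m n 1) U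
    = four_block_mat (1\<^sub>m 1) (0\<^sub>m 1 n) (0\<^sub>m n 1) (transpose_mat U)
      * four_block_mat (1\<^sub>m 1) (0\<^sub>m 1 n) (0\<^sub>m n 1) U"
    using U(1) by (subst transpose_four_block_mat) auto
  also have "\<dots> = four_block_mat (1\<^sub>m 1) (0\<^sub>m 1 n) (0\<^sub>m n 1) (1\<^sub>m n)"
    using U by (subst mult_four_block_mat) auto
  finally show ?thesis
    using four_block_carrier_mat[OF one_carrier_mat U(1), of 1] unfolding orthogonal_matrix_def by simp
qed

lemma block_diag_congruence:
  fixes U D a :: "'a :: comm_ring_1 mat"
  assumes U: "U \<in> carrier_mat n n" and D: "D \<in> carrier_mat n n" and a: "a \<in> carrier_mat 1 1"
  shows "four_block_mat (1\<^sub>m 1) (0\<^sub>m 1 n) (0\<^sub>m n 1) U * four_block_mat a (0\<^sub>m 1 n) (0\<^sub>m n 1) D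
      * transpose_mat (four_block_mat (1\<^sub>m 1) (0\<^sub>m 1 n) (0\<^sub>m n 1) U)
    = four_block_mat a (0\<^sub>m 1 n) (0\<^sub>m n 1) (U * D * transpose_mat U)"
proof -
  have "four_block_mat (1\<^sub>m 1) (0\<^sub>m 1 n) (0\<^sub>m n 1) U * four_block_mat a (0\<^sub>m 1 n) (0\<^sub>m n 1) D
      = four_block_mat a (0\<^sub>m 1 n) (0\<^sub>m n 1) (U * D)"
    using U D a by (subst mult_four_block_mat[of _ 1 1 _ n _ _ _ _ 1 _ n]) auto
  moreover have "transpose_mat (four_block_mat (1\<^sub>m 1) (0\<^sub>m 1 n) (0\<^sub>m n 1) U)
      = four_block_mat (1\<^sub>m 1) (0\<^sub>m 1 n) (0\<^sub>m n 1) (transpose_mat U)"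
    using U by (subst transpose_four_block_mat) auto
  moreover have "four_block_mat a (0\<^sub>m 1 n) (0\<^sub>m n 1) (U * D)
      * four_block_mat (1\<^sub>m 1) (0\<^sub>m 1 n) (0\<^sub>m n 1) (transpose_mat U)
    = four_block_mat a (0\<^sub>m 1 n) (0\<^sub>m n 1) (U * D * transpose_mat U)"
    using U D a by (subst mult_four_block_mat[of _ 1 1 _ n _ _ _ _ 1 _ n]) auto
  ultimately show ?thesis by simp
qed

lemma real_symmetric_has_eigenvalue:
  fixes M :: "real mat"
  assumes M: "M \<in> carrier_mat n n" and sym: "transpose_mat M = M" and n: "n > 0"
  obtains e where "eigenvalue M e"
proof -
  let ?MC = "map_mat complex_of_real M"
  have MC: "?MC \<in> carrier_mat n n" using M by auto
  obtain as where cp: "char_poly ?MC = (\<Prod>a\<leftarrow>as. [:- a, 1:])" and len: "length as = n"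
    using char_poly_factorized[OF MC] by auto
  define l where "l = hd as"
  have "as \<noteq> []" using len n by auto
  then have root: "poly (char_poly ?MC) l = 0" unfolding cp l_def by (cases as) auto
  then have "eigenvalue ?MC l" using eigenvalue_root_char_poly[OF MC] by auto
  then obtain v where v: "v \<in> carrier_vec n" "v \<noteq> 0\<^sub>v n" "?MC *\<^sub>v v = l \<cdot>\<^sub>v v"
    unfolding eigenvalue_def eigenvector_def using MC by auto
  have M_sym: "M $$ (i, j) = M $$ (j, i)" if "i < n" "j < n" for i j
    using sym M that by (metis carrier_matD index_transpose_mat(1))
  txt \<open>The Rayleigh quotient \<open>S / N\<close> of \<open>v\<close> is real because \<open>M\<close> is symmetric.\<close>
  define S where "S = (\<Sum>i<n. cnj (v $ i) * (?MC *\<^sub>v v) $ i)"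
  define N where "N = (\<Sum>i<n. cnj (v $ i) * v $ i)"
  have S_eigen: "S = l * N" unfolding S_def N_def v(3) using v(1)
    by (auto simp: sum_distrib_left intro!: sum.cong)
  have S_double: "S = (\<Sum>i<n. \<Sum>j<n. cnj (v $ i) * of_real (M $$ (i, j)) * v $ j)"
  proof -
    have "(?MC *\<^sub>v v) $ i = (\<Sum>j<n. of_real (M $$ (i, j)) * v $ j)" if "i < n" for i
      using index_mult_mat_vec_sum[OF MC v(1) that] M that by simp
    then show ?thesis
      unfolding S_def by (auto simp: sum_distrib_left mult.assoc intro!: sum.cong)
  qed
  have "cnj S = (\<Sum>i<n. \<Sum>j<n. v $ i * of_real (M $$ (i, j)) * cnj (v $ j))"
    unfolding S_double by simp
  also have "\<dots> = (\<Sum>j<n. \<Sum>i<n. v $ i * of_real (M $$ (i, j)) * cnj (v $ j))"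
    by (rule sum.swap)
  also have "\<dots> = S" unfolding S_double
    by (auto intro!: sum.cong simp: M_sym mult.commute mult.left_commute)
  finally have S_real: "cnj S = S" .
  have N_norm: "N = of_real (\<Sum>i<n. (cmod (v $ i))\<^sup>2)" unfolding N_def
    by (simp add: complex_norm_square mult.commute del: of_real_power)
  obtain i where i: "i < n" "v $ i \<noteq> 0" using nonzero_vec_index[OF v(1,2)] .
  have "(\<Sum>i<n. (cmod (v $ i))\<^sup>2) > 0"
    using i by (intro sum_pos2[of _ i]) auto
  then have "N \<noteq> 0" unfolding N_norm by (metis of_real_eq_0_iff order_less_irrefl)
  moreover have "cnj N = N" unfolding N_norm by (simp only: complex_cnj_complex_of_real)
  moreover have "cnj l * N = l * N"
    using S_real S_eigen \<open>cnj N = N\<close> by (metis complex_cnj_mult)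
  ultimately have "cnj l = l" by simp
  then have l_real: "l = of_real (Re l)" by (metis Reals_cnj_iff complex_is_Real_iff of_real_Re)
  have "complex_of_real (poly (char_poly M) (Re l)) = poly (char_poly ?MC) (of_real (Re l))"
    by (simp only: of_real_hom.char_poly_hom[OF M] of_real_hom.poly_map_poly)
  then have "poly (char_poly M) (Re l) = 0" using root l_real by simp
  then show ?thesis using eigenvalue_root_char_poly[OF M] that by auto
qed

lemma orthogonal_matrix_reflection:
  fixes w :: "real vec"
  assumes w: "w \<in> carrier_vec n" and c: "c * (w \<bullet> w) = 2"
  shows "orthogonal_matrix n (mat n n (\<lambda>(i, j). (if i = j then 1 else 0) - c * w $ i * w $ j))"
    (is "orthogonal_matrix n ?Q")
proof -
  define s where "s = (\<Sum>l<n. w $ l * w $ l)"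
  have cs: "c * s = 2" using c w unfolding s_def scalar_prod_def by (simp add: lessThan_atLeast0)
  have Q: "?Q \<in> carrier_mat n n" by auto
  have QT: "transpose_mat ?Q = ?Q" by (intro eq_matI) auto
  have "(?Q * ?Q) $$ (i, j) = 1\<^sub>m n $$ (i, j)" if ij: "i < n" "j < n" for i j
  proof -
    have "(?Q * ?Q) $$ (i, j) = (\<Sum>l<n. ((if i = l then 1 else 0) - c * w $ i * w $ l)
        * ((if l = j then 1 else 0) - c * w $ l * w $ j))"
      using index_mult_mat_sum[OF Q Q ij] ij by (auto intro!: sum.cong)
    also have "\<dots> = (\<Sum>l<n. (if i = l then 1 else 0) * (if l = j then 1 else 0)
        - (if i = l then c * w $ l * w $ j else 0) - (if l = j then c * w $ i * w $ l else 0)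
        + (c * c * w $ i * w $ j) * (w $ l * w $ l))"
      by (intro sum.cong) (auto simp: algebra_simps)
    also have "\<dots> = (if i = j then 1 else 0) - c * w $ i * w $ j - c * w $ i * w $ j
        + (c * c * w $ i * w $ j) * s"
      using ij unfolding s_def sum.distrib sum_subtractf
      by (simp add: sum_distrib_left if_distrib[of "\<lambda>x. x * _"] sum.delta sum.delta' cong: if_cong)
    also have "\<dots> = (if i = j then 1 else 0) - 2 * c * w $ i * w $ j + (c * s) * c * w $ i * w $ j"
      by (simp add: algebra_simps)
    also have "\<dots> = 1\<^sub>m n $$ (i, j)" unfolding cs using ij by simp
    finally show ?thesis .
  qed
  then have "transpose_mat ?Q * ?Q = 1\<^sub>m n" unfolding QT using Q by (intro eq_matI) auto
  then show ?thesis using Q unfolding orthogonal_matrix_def by blast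
qed

text \<open>The witness is the reflection in the hyperplane orthogonal to \<open>u - e\<^sub>0\<close>.\<close>
lemma orthogonal_matrix_first_col:
  fixes u :: "real vec"
  assumes u: "u \<in> carrier_vec n" and uu: "u \<bullet> u = 1" and n: "n > 0"
  obtains Q where "orthogonal_matrix n Q" "col Q 0 = u"
proof (cases "u = unit_vec n 0")
  case True
  then show ?thesis using that[of "1\<^sub>m n"] n by (simp add: orthogonal_matrix_one)
next
  case False
  define w where "w = u - unit_vec n 0"
  have w_carrier: "w \<in> carrier_vec n" unfolding w_def using u by simp
  have w: "w $ i = u $ i - (if i = 0 then 1 else 0)" if "i < n" for i
    unfolding w_def using u that by auto
  have u_norm: "(\<Sum>l<n. u $ l * u $ l) = 1"
    using uu u unfolding scalar_prod_def by (simp add: lessThan_atLeast0)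
  have "w \<bullet> w = (\<Sum>l<n. u $ l * u $ l - 2 * (if l = 0 then u $ l else 0) + (if l = 0 then 1 else 0))"
    using w_carrier unfolding scalar_prod_def lessThan_atLeast0[symmetric]
    by (intro sum.cong) (auto simp: w algebra_simps)
  then have ww: "w \<bullet> w = 2 - 2 * u $ 0"
    using n by (simp add: sum.distrib sum_subtractf u_norm sum_distrib_left[symmetric])
  have "\<exists>i<n. w $ i \<noteq> 0"
  proof (rule ccontr)
    assume "\<not> ?thesis"
    then have "u = unit_vec n 0" using u w by (intro eq_vecI) (auto split: if_splits)
    then show False using False by simp
  qed
  then obtain i where i: "i < n" "w $ i \<noteq> 0" by blast
  have "w \<bullet> w > 0" unfolding scalar_prod_def using w_carrier i
    by (intro sum_pos2[of _ i]) (auto simp: zero_less_mult_iff)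
  define c where "c = 2 / (w \<bullet> w)"
  have c: "c * (w \<bullet> w) = 2" unfolding c_def using \<open>w \<bullet> w > 0\<close> by auto
  have cw0: "c * w $ 0 = -1" using w[OF n] ww \<open>w \<bullet> w > 0\<close> unfolding c_def by (auto simp: field_simps)
  define Q where "Q = mat n n (\<lambda>(i, j). (if i = j then 1 else 0) - c * w $ i * w $ j)"
  have "col Q 0 = u"
  proof (intro eq_vecI)
    fix i assume "i < dim_vec u"
    then have i: "i < n" using u by auto
    have "col Q 0 $ i = (if i = 0 then 1 else 0) - w $ i * (c * w $ 0)"
      using i n unfolding Q_def by (simp add: algebra_simps)
    then show "col Q 0 $ i = u $ i" unfolding cw0 using w[OF i] by simp
  qed (use u in \<open>auto simp: Q_def\<close>)
  then show ?thesis
    using that orthogonal_matrix_reflection[OF w_carrier c] unfolding Q_def by blast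
qed

lemma symmetric_deflation:
  fixes M :: "real mat"
  assumes M: "M \<in> carrier_mat (Suc n) (Suc n)" and sym: "transpose_mat M = M"
  obtains Q e M' where "orthogonal_matrix (Suc n) Q" "M' \<in> carrier_mat n n" "transpose_mat M' = M'"
    "transpose_mat Q * M * Q = four_block_mat (weight_mat [e]) (0\<^sub>m 1 n) (0\<^sub>m n 1) M'"
proof -
  obtain e where "eigenvalue M e" using real_symmetric_has_eigenvalue[OF M sym] by auto
  then obtain v where v: "v \<in> carrier_vec (Suc n)" "v \<noteq> 0\<^sub>v (Suc n)" "M *\<^sub>v v = e \<cdot>\<^sub>v v"
    unfolding eigenvalue_def eigenvector_def using M by auto
  obtain i where i: "i < Suc n" "v $ i \<noteq> 0" using nonzero_vec_index[OF v(1,2)] .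
  have v_pos: "v \<bullet> v > 0" unfolding scalar_prod_def using v(1) i
    by (intro sum_pos2[of _ i]) (auto simp: zero_less_mult_iff)
  define u where "u = (1 / sqrt (v \<bullet> v)) \<cdot>\<^sub>v v"
  have u: "u \<in> carrier_vec (Suc n)" "u \<bullet> u = 1" "M *\<^sub>v u = e \<cdot>\<^sub>v u"
    unfolding u_def using v v_pos mult_mat_vec[OF M v(1)]
    by (auto simp: power2_eq_square[symmetric] smult_smult_assoc mult.commute)
  obtain Q where Q: "orthogonal_matrix (Suc n) Q" and Q0: "col Q 0 = u"
    using orthogonal_matrix_first_col[OF u(1,2)] by auto
  note Q' = orthogonal_matrixD[OF Q]
  define A where "A = transpose_mat Q * M * Q"
  have A: "A \<in> carrier_mat (Suc n) (Suc n)" unfolding A_def using Q'(1) M by auto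
  have QM: "transpose_mat Q * M \<in> carrier_mat (Suc n) (Suc n)" using Q'(1) M by auto
  have "transpose_mat A = transpose_mat Q * transpose_mat (transpose_mat Q * M)"
    unfolding A_def using transpose_mult[OF QM Q'(1)] by simp
  also have "transpose_mat (transpose_mat Q * M) = M * Q"
    using transpose_mult[of "transpose_mat Q" "Suc n" "Suc n" M "Suc n"] Q'(1) M sym by simp
  finally have A_sym: "transpose_mat A = A" unfolding A_def using Q'(1) M by simp
  txt \<open>The first column of \<open>A\<close> is \<open>Q\<^sup>T M u = e Q\<^sup>T u = e e\<^sub>0\<close>.\<close>
  have "col A 0 = (transpose_mat Q * M) *\<^sub>v u"
    unfolding A_def Q0[symmetric] using col_mult2[OF QM Q'(1), of 0] by simp
  also have "\<dots> = transpose_mat Q *\<^sub>v (M *\<^sub>v u)" using Q'(1) M u(1) by simp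
  also have "\<dots> = e \<cdot>\<^sub>v (transpose_mat Q *\<^sub>v col Q 0)"
    unfolding Q0 u(3) using Q'(1) u(1) by (simp add: mult_mat_vec[of _ "Suc n" "Suc n"])
  also have "transpose_mat Q *\<^sub>v col Q 0 = col (1\<^sub>m (Suc n)) 0"
    using col_mult2[of "transpose_mat Q" "Suc n" "Suc n" Q "Suc n" 0] Q' by simp
  finally have A_col: "A $$ (i, 0) = (if i = 0 then e else 0)" if "i < Suc n" for i
    using that A by (auto dest: arg_cong[where f = "\<lambda>x. x $ i"])
  have A_row: "A $$ (0, j) = (if j = 0 then e else 0)" if "j < Suc n" for j
    using A_col[OF that] arg_cong[OF A_sym, of "\<lambda>X. X $$ (0, j)"] that A by auto
  define M' where "M' = mat n n (\<lambda>(i, j). A $$ (Suc i, Suc j))"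
  have A_blocks: "A = four_block_mat (weight_mat [e]) (0\<^sub>m 1 n) (0\<^sub>m n 1) M'"
    using A A_col A_row unfolding M'_def weight_mat_def
    by (intro eq_matI) (auto simp: gr0_conv_Suc)
  have M'_sym: "transpose_mat M' = M'"
    unfolding M'_def using A arg_cong[OF A_sym, of "\<lambda>X. X $$ (Suc _, Suc _)"]
    by (intro eq_matI) (auto, metis Suc_less_eq carrier_matD index_transpose_mat(1))
  show ?thesis
    by (rule that[OF Q _ M'_sym A_blocks[unfolded A_def]]) (simp add: M'_def)
qed

theorem real_symmetric_diagonalization:
  fixes M :: "real mat"
  assumes "M \<in> carrier_mat n n" and "transpose_mat M = M"
  shows "\<exists>U d. orthogonal_matrix n U \<and> length d = n \<and> M = U * weight_mat d * transpose_mat U"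
  using assms
proof (induction n arbitrary: M)
  case 0
  then show ?case
    by (intro exI[of _ "1\<^sub>m 0"] exI[of _ "[]"]) (auto simp: orthogonal_matrix_one weight_mat_def)
next
  case (Suc n)
  obtain Q e M' where Q: "orthogonal_matrix (Suc n) Q" and M': "M' \<in> carrier_mat n n"
    "transpose_mat M' = M'"
    and QMQ: "transpose_mat Q * M * Q = four_block_mat (weight_mat [e]) (0\<^sub>m 1 n) (0\<^sub>m n 1) M'"
    using symmetric_deflation[OF Suc.prems] by blast
  obtain U' d' where U': "orthogonal_matrix n U'" and d': "length d' = n"
    and M'_eq: "M' = U' * weight_mat d' * transpose_mat U'"
    using Suc.IH[OF M'] by blast
  define B where "B = four_block_mat (1\<^sub>m 1) (0\<^sub>m 1 n) (0\<^sub>m n 1) U'"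
  have B: "orthogonal_matrix (Suc n) B" unfolding B_def by (rule orthogonal_matrix_bordered[OF U'])
  note Q' = orthogonal_matrixD[OF Q] and B' = orthogonal_matrixD[OF B]
  have U'c: "U' \<in> carrier_mat n n" using orthogonal_matrixD(1)[OF U'] .
  have D: "weight_mat (e # d') \<in> carrier_mat (Suc n) (Suc n)" using weight_mat_carrier[of "e # d'"] d' by simp
  have D_blocks:
    "weight_mat (e # d') = four_block_mat (weight_mat [e]) (0\<^sub>m 1 n) (0\<^sub>m n 1) (weight_mat d')"
    using weight_mat_Cons[of e d'] d' by simp
  have "B * weight_mat (e # d') * transpose_mat B = transpose_mat Q * M * Q"
    unfolding QMQ B_def M'_eq D_blocks
    by (rule block_diag_congruence) (use U'c weight_mat_carrier[of d'] d' in \<open>auto simp: weight_mat_def\<close>)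
  moreover have "Q * (transpose_mat Q * M * Q) * transpose_mat Q
      = (Q * transpose_mat Q) * M * (Q * transpose_mat Q)"
    using Q'(1) Suc.prems(1) by (simp add: assoc_mult_mat[of _ "Suc n" "Suc n" _ "Suc n" _ "Suc n"])
  ultimately have "M = Q * (B * weight_mat (e # d') * transpose_mat B) * transpose_mat Q"
    using Q'(3) Suc.prems(1) by simp
  also have "\<dots> = (Q * B) * weight_mat (e # d') * transpose_mat (Q * B)"
    using Q'(1) B'(1) D
    by (simp add: transpose_mult assoc_mult_mat[of _ "Suc n" "Suc n" _ "Suc n" _ "Suc n"])
  finally show ?case
    using orthogonal_matrix_mult[OF Q B] d' by (intro exI[of _ "Q * B"] exI[of _ "e # d'"]) auto
qed

section \<open>Sylvester's law of inertia\<close>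

lemma order_prod_linear_factors:
  "order x (\<Prod>a\<leftarrow>d. [:- a, 1::real:]) = count_list d x"
proof (induction d)
  case Nil
  then show ?case by (simp add: order_0I)
next
  case (Cons a d)
  have "(\<Prod>a\<leftarrow>a # d. [:- a, 1::real:]) \<noteq> 0"
    by (simp only: prod_list_zero_iff) auto
  then have "order x (\<Prod>a\<leftarrow>a # d. [:- a, 1:])
      = order x [:- a, 1::real:] + order x (\<Prod>a\<leftarrow>d. [:- a, 1:])"
    using order_mult[of "[:- a, 1:]" "\<Prod>a\<leftarrow>d. [:- a, 1::real:]" x] by simp
  moreover have "order x [:- a, 1::real:] = (if x = a then 1 else 0)"
    using order_power_n_n[of a 1] by (auto intro: order_0I)
  ultimately show ?case using Cons by simp
qed

lemma sum_order_prod_linear_factors: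
  "(\<Sum>x\<in>{x. P x \<and> poly (\<Prod>a\<leftarrow>d. [:- a, 1::real:]) x = 0}. order x (\<Prod>a\<leftarrow>d. [:- a, 1:]))
    = length (filter P d)"
proof -
  have "{x. P x \<and> poly (\<Prod>a\<leftarrow>d. [:- a, 1::real:]) x = 0} = {x. P x \<and> x \<in> set d}"
    by (auto simp: poly_prod_list_zero_iff)
  moreover have "(\<Sum>x\<in>{x. P x \<and> x \<in> set d}. count_list d x)
      = (\<Sum>x\<in>{x. P x \<and> x \<in> set d}. count_list (filter P d) x)"
    by (intro sum.cong) (auto simp: count_list_eq_length_filter filter_filter
        intro!: arg_cong[of _ _ length] filter_cong)
  moreover have "\<dots> = length (filter P d)" by (rule sum_count_set) auto
  ultimately show ?thesis unfolding order_prod_linear_factors by simp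
qed

lemma char_poly_orthogonal_congruence:
  assumes "orthogonal_matrix n U" "length d = n"
  shows "char_poly (U * weight_mat d * transpose_mat U) = (\<Prod>a\<leftarrow>d. [:- a, 1::real:])"
proof -
  note U = orthogonal_matrixD[OF assms(1)]
  have "similar_mat (U * weight_mat d * transpose_mat U) (weight_mat d)"
    unfolding similar_mat_def similar_mat_wit_def Let_def
    using U weight_mat_carrier[of d] assms(2) by (intro exI[of _ U] exI[of _ "transpose_mat U"]) auto
  then show ?thesis unfolding char_poly_weight_mat[symmetric] by (rule char_poly_similar)
qed

lemma eigen_counts_orthogonal_congruence:
  assumes "orthogonal_matrix n U" "length d = n"
  shows "num_pos_eigs (U * weight_mat d * transpose_mat U) = length (filter (\<lambda>a. a > 0) d)"
    and "num_neg_eigs (U * weight_mat d * transpose_mat U) = length (filter (\<lambda>a. a < 0) d)"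
    and "num_zero_eigs (U * weight_mat d * transpose_mat U) = length (filter (\<lambda>a. a = 0) d)"
  using sum_order_prod_linear_factors[where P = "\<lambda>x. x > 0" and d = d]
    sum_order_prod_linear_factors[where P = "\<lambda>x. x < 0" and d = d] order_prod_linear_factors[of 0 d]
  unfolding num_pos_eigs_def num_neg_eigs_def num_zero_eigs_def
    char_poly_orthogonal_congruence[OF assms] count_list_eq_length_filter
  by (auto intro!: arg_cong[of _ _ length] filter_cong)

lemma det_zero_row:
  assumes A: "A \<in> carrier_mat n n" and k: "k < n" and zero: "\<And>j. j < n \<Longrightarrow> A $$ (k, j) = 0"
  shows "det A = (0 :: 'a :: comm_ring_1)"
proof -
  have "(\<Prod>i = 0..<n. A $$ (i, p i)) = 0" if "p permutes {0..<n}" for p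
    using k zero permutes_in_image[OF that, of k] by (intro prod_zero) (auto intro!: bexI[of _ k])
  then show ?thesis unfolding det_def'[OF A] by simp
qed

lemma underdetermined_system_nonzero_solution:
  fixes N :: "real mat"
  assumes N: "N \<in> carrier_mat k n" and T: "T \<subseteq> {..<k}" and S: "S \<subseteq> {..<n}"
    and card: "card T < card S"
  obtains u where "u \<in> carrier_vec n" "u \<noteq> 0\<^sub>v n" "\<And>i. i < n \<Longrightarrow> i \<notin> S \<Longrightarrow> u $ i = 0"
    "\<And>r. r \<in> T \<Longrightarrow> (N *\<^sub>v u) $ r = 0"
proof -
  define s where "s = card S"
  define t where "t = card T"
  obtain f where f: "bij_betw f {0..<s} S"
    using ex_bij_betw_nat_finite[OF finite_subset[OF S]] unfolding s_def by auto
  obtain g where g: "bij_betw g {0..<t} T"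
    using ex_bij_betw_nat_finite[OF finite_subset[OF T]] unfolding t_def by auto
  have ts: "t < s" using card unfolding s_def t_def .
  txt \<open>The square system \<open>N'\<close>, padded with zero rows, is singular.\<close>
  define N' where "N' = mat s s (\<lambda>(i, j). if i < t then N $$ (g i, f j) else 0)"
  have N': "N' \<in> carrier_mat s s" unfolding N'_def by auto
  have "det N' = 0"
    by (rule det_zero_row[OF N', of "s - 1"]) (use ts in \<open>auto simp: N'_def\<close>)
  then obtain y where y: "y \<in> carrier_vec s" "y \<noteq> 0\<^sub>v s" "N' *\<^sub>v y = 0\<^sub>v s"
    using det_0_iff_vec_prod_zero[OF N'] by auto
  define u where "u = vec n (\<lambda>i. if i \<in> S then y $ (inv_into {0..<s} f i) else 0)"
  have u: "u \<in> carrier_vec n" unfolding u_def by auto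
  have fS: "f j \<in> S" if "j < s" for j using f that by (auto simp: bij_betw_def)
  have fn: "f j < n" if "j < s" for j using fS[OF that] S by auto
  have uf: "u $ f j = y $ j" if "j < s" for j
    unfolding u_def using fS[OF that] fn[OF that] bij_betw_inv_into_left[OF f] that by auto
  have "u \<noteq> 0\<^sub>v n"
  proof
    assume "u = 0\<^sub>v n"
    then have "y = 0\<^sub>v s" using uf fn y(1) by (intro eq_vecI) auto
    then show False using y(2) by simp
  qed
  moreover have "u $ i = 0" if "i < n" "i \<notin> S" for i unfolding u_def using that by auto
  moreover have "(N *\<^sub>v u) $ r = 0" if r: "r \<in> T" for r
  proof -
    obtain i where i: "i < t" "g i = r" using g r by (auto simp: bij_betw_def)
    have "(N *\<^sub>v u) $ r = (\<Sum>l<n. N $$ (r, l) * u $ l)"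
      using index_mult_mat_vec_sum[OF N u] r T by auto
    also have "\<dots> = (\<Sum>l\<in>S. N $$ (r, l) * u $ l)"
      by (rule sum.mono_neutral_right) (use S in \<open>auto simp: u_def\<close>)
    also have "\<dots> = (\<Sum>j\<in>{0..<s}. N $$ (r, f j) * u $ f j)"
      by (rule sum.reindex_bij_betw[OF f, symmetric])
    also have "\<dots> = (\<Sum>j<s. N' $$ (i, j) * y $ j)"
      using i ts by (auto simp: lessThan_atLeast0 uf N'_def intro!: sum.cong)
    also have "\<dots> = (N' *\<^sub>v y) $ i" using index_mult_mat_vec_sum[OF N' y(1)] i ts by auto
    finally show ?thesis using y(3) i ts by auto
  qed
  ultimately show ?thesis using that u by blast
qed

lemma quadratic_form_congruence:
  fixes B :: "real mat"
  assumes B: "B \<in> carrier_mat n m" and e: "length e = m" and y: "y \<in> carrier_vec n"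
  shows "y \<bullet> ((B * weight_mat e * transpose_mat B) *\<^sub>v y)
    = (\<Sum>r<m. e ! r * ((transpose_mat B *\<^sub>v y) $ r)\<^sup>2)"
proof -
  define z where "z = transpose_mat B *\<^sub>v y"
  have z: "z \<in> carrier_vec m" unfolding z_def using B y by auto
  have W: "weight_mat e \<in> carrier_mat m m" using weight_mat_carrier[of e] e by simp
  have BW: "B * weight_mat e \<in> carrier_mat n m" using B W by simp
  have "(B * weight_mat e * transpose_mat B) *\<^sub>v y = (B * weight_mat e) *\<^sub>v z"
    unfolding z_def by (rule assoc_mult_mat_vec[OF BW _ y]) (use B in simp)
  also have "\<dots> = B *\<^sub>v (weight_mat e *\<^sub>v z)" by (rule assoc_mult_mat_vec[OF B W]) (use z e in simp)
  finally have "y \<bullet> ((B * weight_mat e * transpose_mat B) *\<^sub>v y) = y \<bullet> (B *\<^sub>v (weight_mat e *\<^sub>v z))"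
    by simp
  also have "\<dots> = z \<bullet> (weight_mat e *\<^sub>v z)"
    using transpose_vec_mult_scalar[OF B mult_mat_vec_carrier[OF W z] y] unfolding z_def by simp
  also have "\<dots> = (\<Sum>r<m. e ! r * (z $ r)\<^sup>2)"
    using z e unfolding weight_mat_mult_vec[of z e, OF z[folded e]] scalar_prod_def
    by (auto simp: lessThan_atLeast0 power2_eq_square mult_ac intro!: sum.cong)
  finally show ?thesis unfolding z_def .
qed

text \<open>The core of Sylvester's law of inertia: otherwise some \<open>y = G u\<close>, with \<open>u\<close> supported on
  the positive entries of \<open>D\<^sub>1\<close>, makes the quadratic form positive when read through \<open>D\<^sub>1\<close> and
  non-positive when read through \<open>D\<^sub>2\<close>.\<close>
lemma positive_count_le_of_congruent:
  fixes B1 B2 G :: "real mat"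
  assumes B1: "B1 \<in> carrier_mat n m1" and B2: "B2 \<in> carrier_mat n m2" and G: "G \<in> carrier_mat n m1"
    and e1: "length e1 = m1" and e2: "length e2 = m2"
    and B1G: "transpose_mat B1 * G = 1\<^sub>m m1"
    and eq: "B1 * weight_mat e1 * transpose_mat B1 = B2 * weight_mat e2 * transpose_mat B2"
  shows "length (filter (\<lambda>a. a > 0) e1) \<le> length (filter (\<lambda>a. a > 0) e2)"
proof (rule ccontr)
  define S1 where "S1 = {r. r < m1 \<and> e1 ! r > 0}"
  define S2 where "S2 = {r. r < m2 \<and> e2 ! r > 0}"
  assume "\<not> ?thesis"
  then have card: "card S2 < card S1" unfolding S1_def S2_def length_filter_conv_card e1 e2 by simp
  have N: "transpose_mat B2 * G \<in> carrier_mat m2 m1" using B2 G by auto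
  obtain u where u: "u \<in> carrier_vec m1" "u \<noteq> 0\<^sub>v m1"
    "\<And>i. i < m1 \<Longrightarrow> i \<notin> S1 \<Longrightarrow> u $ i = 0" "\<And>r. r \<in> S2 \<Longrightarrow> ((transpose_mat B2 * G) *\<^sub>v u) $ r = 0"
    by (rule underdetermined_system_nonzero_solution[OF N _ _ card]) (auto simp: S1_def S2_def)
  define y where "y = G *\<^sub>v u"
  have y: "y \<in> carrier_vec n" unfolding y_def using G u by auto
  have "transpose_mat B1 *\<^sub>v y = (transpose_mat B1 * G) *\<^sub>v u"
    unfolding y_def using B1 G u by simp
  then have B1y: "transpose_mat B1 *\<^sub>v y = u" using B1G u by simp
  have B2y: "transpose_mat B2 *\<^sub>v y = (transpose_mat B2 * G) *\<^sub>v u"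
    unfolding y_def using B2 G u by simp
  define q where "q = y \<bullet> ((B1 * weight_mat e1 * transpose_mat B1) *\<^sub>v y)"
  obtain i where i: "i < m1" "u $ i \<noteq> 0" using nonzero_vec_index[OF u(1,2)] .
  have "q > 0"
    unfolding q_def quadratic_form_congruence[OF B1 e1 y] B1y
  proof (rule sum_pos2[of _ i])
    show "0 < e1 ! i * (u $ i)\<^sup>2" using u(3) i unfolding S1_def by fastforce
    show "0 \<le> e1 ! r * (u $ r)\<^sup>2" if "r \<in> {..<m1}" for r
      using u(3)[of r] that unfolding S1_def by (cases "e1 ! r > 0") auto
  qed (use i in auto)
  moreover have "q \<le> 0"
    unfolding q_def eq quadratic_form_congruence[OF B2 e2 y] B2y
  proof (rule sum_nonpos)
    show "e2 ! r * (((transpose_mat B2 * G) *\<^sub>v u) $ r)\<^sup>2 \<le> 0" if "r \<in> {..<m2}" for r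
      using u(4)[of r] that unfolding S2_def by (cases "e2 ! r > 0") (auto simp: mult_nonpos_nonneg)
  qed
  ultimately show False by simp
qed

lemma congruence_weight_mat_map_uminus:
  fixes B :: "real mat"
  assumes "B \<in> carrier_mat n m" "length e = m"
  shows "B * weight_mat (map uminus e) * transpose_mat B = - (B * weight_mat e * transpose_mat B)"
proof -
  have "weight_mat (map uminus e) = - weight_mat e"
    unfolding weight_mat_def by (intro eq_matI) auto
  moreover have "dim_col B = dim_row (weight_mat e)"
    "dim_col (B * weight_mat e) = dim_row (transpose_mat B)"
    using assms unfolding weight_mat_def by auto
  ultimately show ?thesis by simp
qed

lemma negative_count_le_of_congruent:
  fixes B1 B2 G :: "real mat"
  assumes "B1 \<in> carrier_mat n m1" "B2 \<in> carrier_mat n m2" "G \<in> carrier_mat n m1"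
    and "length e1 = m1" "length e2 = m2"
    and "transpose_mat B1 * G = 1\<^sub>m m1"
    and eq: "B1 * weight_mat e1 * transpose_mat B1 = B2 * weight_mat e2 * transpose_mat B2"
  shows "length (filter (\<lambda>a. a < 0) e1) \<le> length (filter (\<lambda>a. a < 0) e2)"
proof -
  have "B1 * weight_mat (map uminus e1) * transpose_mat B1
      = B2 * weight_mat (map uminus e2) * transpose_mat B2"
    using eq congruence_weight_mat_map_uminus assms(1,2,4,5) by metis
  from positive_count_le_of_congruent[OF assms(1-3) _ _ assms(6) this] assms(4,5)
  show ?thesis by (simp add: filter_map o_def)
qed

lemma symmetric_congruence:
  fixes P M :: "real mat"
  assumes P: "P \<in> carrier_mat n k" and M: "M \<in> carrier_mat k k" and sym: "transpose_mat M = M"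
  shows "transpose_mat (P * M * transpose_mat P) = P * M * transpose_mat P"
proof -
  have PM: "P * M \<in> carrier_mat n k" using P M by auto
  show ?thesis
    using transpose_mult[OF PM, of "transpose_mat P" n] transpose_mult[OF P M] P M sym
    by (simp add: assoc_mult_mat[of P n k M k "transpose_mat P" n])
qed

theorem inertia_congruence_full_column_rank:
  fixes P M G :: "real mat"
  assumes P: "P \<in> carrier_mat n k" and M: "M \<in> carrier_mat k k" and sym: "transpose_mat M = M"
    and G: "G \<in> carrier_mat k k" and GP: "G * (transpose_mat P * P) = 1\<^sub>m k"
  shows "num_pos_eigs (P * M * transpose_mat P) = num_pos_eigs M"
    and "num_neg_eigs (P * M * transpose_mat P) = num_neg_eigs M"
    and "num_zero_eigs (P * M * transpose_mat P) + k = num_zero_eigs M + n"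
proof -
  define L where "L = P * M * transpose_mat P"
  have L: "L \<in> carrier_mat n n" unfolding L_def using P M by auto
  obtain U d where U: "orthogonal_matrix k U" and d: "length d = k"
    and M_eq: "M = U * weight_mat d * transpose_mat U"
    using real_symmetric_diagonalization[OF M sym] by blast
  obtain V d' where V: "orthogonal_matrix n V" and d': "length d' = n"
    and L_eq: "L = V * weight_mat d' * transpose_mat V"
    using real_symmetric_diagonalization[OF L symmetric_congruence[OF P M sym, folded L_def]] by blast
  note U' = orthogonal_matrixD[OF U] and V' = orthogonal_matrixD[OF V]
  define A where "A = P * U"
  have A: "A \<in> carrier_mat n k" unfolding A_def using P U'(1) by auto
  have D: "weight_mat d \<in> carrier_mat k k" using weight_mat_carrier[of d] d by simp
  have "L = P * (U * weight_mat d * transpose_mat U) * transpose_mat P" unfolding L_def M_eq ..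
  also have "\<dots> = A * weight_mat d * transpose_mat A"
    unfolding A_def using P U'(1) D
    by (simp add: transpose_mult assoc_mult_mat[of _ n k _ k _ k] assoc_mult_mat[of _ k k _ k _ n]
        assoc_mult_mat[of _ n k _ k _ n])
  finally have LA: "V * weight_mat d' * transpose_mat V = A * weight_mat d * transpose_mat A"
    unfolding L_eq .
  txt \<open>\<open>A\<^sup>T\<close> is onto as well, with right inverse \<open>P G U\<close>.\<close>
  have PP: "transpose_mat P * P \<in> carrier_mat k k" using P by auto
  have PG: "(transpose_mat P * P) * G = 1\<^sub>m k" by (rule mat_mult_left_right_inverse[OF G PP GP])
  define C where "C = P * G * U"
  have C: "C \<in> carrier_mat n k" unfolding C_def using P G U'(1) by auto
  have "transpose_mat A * C = transpose_mat U * ((transpose_mat P * P) * G) * U"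
    unfolding A_def C_def transpose_mult[OF P U'(1)] using P G U'(1)
    by (simp add: assoc_mult_mat[of _ k k _ k _ k] assoc_mult_mat[of _ k n _ k _ k]
        assoc_mult_mat[of _ k n _ n _ k] assoc_mult_mat[of _ k k _ n _ k] assoc_mult_mat[of _ n k _ k _ k])
  then have AC: "transpose_mat A * C = 1\<^sub>m k" unfolding PG using U' by simp
  have pos: "length (filter (\<lambda>a. a > 0) d') = length (filter (\<lambda>a. a > 0) d)"
    using positive_count_le_of_congruent[OF V'(1) A V'(1) d' d V'(2) LA]
      positive_count_le_of_congruent[OF A V'(1) C d d' AC LA[symmetric]] by simp
  have neg: "length (filter (\<lambda>a. a < 0) d') = length (filter (\<lambda>a. a < 0) d)"
    using negative_count_le_of_congruent[OF V'(1) A V'(1) d' d V'(2) LA]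
      negative_count_le_of_congruent[OF A V'(1) C d d' AC LA[symmetric]] by simp
  have split: "length (filter (\<lambda>a. a > 0) xs) + length (filter (\<lambda>a. a < 0) xs)
      + length (filter (\<lambda>a. a = 0) xs) = length xs" for xs :: "real list"
    by (induction xs) auto
  note counts_M = eigen_counts_orthogonal_congruence[OF U d, folded M_eq]
  note counts_L = eigen_counts_orthogonal_congruence[OF V d', folded L_eq, unfolded L_def]
  show "num_pos_eigs (P * M * transpose_mat P) = num_pos_eigs M"
    "num_neg_eigs (P * M * transpose_mat P) = num_neg_eigs M"
    "num_zero_eigs (P * M * transpose_mat P) + k = num_zero_eigs M + n"
    unfolding counts_M counts_L using pos neg split[of d] split[of d'] d d' by linarith+
qed

section \<open>Spanning forests\<close>

lemma rtrancl_distinct_path: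
  assumes "(a, b) \<in> R\<^sup>*"
  obtains vs where "vs \<noteq> []" "hd vs = a" "last vs = b" "distinct vs"
    "successively (\<lambda>x y. (x, y) \<in> R) vs"
  using assms
proof (induction arbitrary: thesis rule: converse_rtrancl_induct)
  case base
  then show ?case by (auto intro: base[of "[b]"])
next
  case (step a c)
  obtain vs where vs: "vs \<noteq> []" "hd vs = c" "last vs = b" "distinct vs"
    "successively (\<lambda>x y. (x, y) \<in> R) vs"
    using step.IH by blast
  show ?case
  proof (cases "a \<in> set vs")
    case True
    then obtain xs ys where vs_split: "vs = xs @ a # ys" by (meson split_list)
    show ?thesis
      by (rule step.prems[of "a # ys"])
        (use vs in \<open>auto simp: vs_split successively_append_iff\<close>)
  next
    case False
    then show ?thesis
      using vs step.hyps(1) by (intro step.prems[of "a # vs"]) (auto simp: neq_Nil_conv)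
  qed
qed

lemma rtrancl_add_symmetric_edge:
  "(S \<union> {(a, b), (b, a)})\<^sup>* = S\<^sup>* \<union>
     {x. (x, a) \<in> S\<^sup>* \<or> (x, b) \<in> S\<^sup>*} \<times> {y. (a, y) \<in> S\<^sup>* \<or> (b, y) \<in> S\<^sup>*}"
proof -
  have "S \<union> {(a, b), (b, a)} = insert (a, b) (insert (b, a) S)" by auto
  then show ?thesis by (auto simp: rtrancl_insert)
qed

lemma rtrancl_add_symmetric_edge_Image:
  assumes S: "sym S"
  shows "(S \<union> {(a, b), (b, a)})\<^sup>* `` {x}
    = (if x \<in> S\<^sup>* `` {a} \<union> S\<^sup>* `` {b} then S\<^sup>* `` {a} \<union> S\<^sup>* `` {b} else S\<^sup>* `` {x})"
proof -
  have sym_path: "(y, x) \<in> S\<^sup>*" if "(x, y) \<in> S\<^sup>*" for x y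
    using sym_rtrancl[OF S] that by (auto dest: symD)
  show ?thesis
  proof (cases "x \<in> S\<^sup>* `` {a} \<union> S\<^sup>* `` {b}")
    case True
    then have ax: "(a, x) \<in> S\<^sup>* \<or> (b, x) \<in> S\<^sup>*" by simp
    then have "(x, a) \<in> S\<^sup>* \<or> (x, b) \<in> S\<^sup>*" using sym_path by auto
    moreover have "(a, y) \<in> S\<^sup>* \<or> (b, y) \<in> S\<^sup>*" if "(x, y) \<in> S\<^sup>*" for y
      using ax rtrancl_trans[OF _ that] by auto
    ultimately show ?thesis using True unfolding rtrancl_add_symmetric_edge by auto
  next
    case False
    then have "(x, a) \<notin> S\<^sup>*" "(x, b) \<notin> S\<^sup>*" using sym_path by auto
    then show ?thesis using False unfolding rtrancl_add_symmetric_edge by auto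
  qed
qed

lemma card_quotient_add_edge:
  fixes S :: "(nat \<times> nat) set"
  assumes S: "sym S" and a: "a < n" and b: "b < n" and ab: "(a, b) \<notin> S\<^sup>*"
  shows "card ({0..<n} // {(u, v). u < n \<and> v < n \<and> (u, v) \<in> (S \<union> {(a, b), (b, a)})\<^sup>*}) + 1
    = card ({0..<n} // {(u, v). u < n \<and> v < n \<and> (u, v) \<in> S\<^sup>*})"
proof -
  define V where "V = {0..<n}"
  define R where "R = {(u, v). u < n \<and> v < n \<and> (u, v) \<in> S\<^sup>*}"
  define R' where "R' = {(u, v). u < n \<and> v < n \<and> (u, v) \<in> (S \<union> {(a, b), (b, a)})\<^sup>*}"
  define K where "K x = R `` {x}" for x
  have sym_path: "(y, x) \<in> S\<^sup>*" if "(x, y) \<in> S\<^sup>*" for x y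
    using sym_rtrancl[OF S] that by (auto dest: symD)
  have K_def': "K x = {y. y < n \<and> (x, y) \<in> S\<^sup>*}" if "x < n" for x
    using that unfolding K_def R_def by auto
  have K_eq: "K y = K x" if "y \<in> K x" for x y
  proof -
    have xy: "x < n" "y < n" "(x, y) \<in> S\<^sup>*" using that unfolding K_def R_def by auto
    show ?thesis
      unfolding K_def'[OF xy(1)] K_def'[OF xy(2)]
      using rtrancl_trans[OF xy(3)] rtrancl_trans[OF sym_path[OF xy(3)]] by blast
  qed
  have in_K: "x \<in> K x" if "x < n" for x using that unfolding K_def R_def by auto
  define C where "C = K a \<union> K b"
  have R'_class: "R' `` {x} = (if x \<in> C then C else K x)" if x: "x < n" for x
    using rtrancl_add_symmetric_edge_Image[OF S, of a b x] x a b
    unfolding R'_def C_def K_def R_def by (auto split: if_splits)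
  have "V // R' = insert C (V // R - {K a, K b})"
  proof (intro equalityI subsetI)
    fix X assume "X \<in> V // R'"
    then obtain x where x: "x \<in> V" "X = R' `` {x}" unfolding quotient_def by blast
    have "K x \<noteq> K a" "K x \<noteq> K b" if "x \<notin> C"
      using that in_K[of x] x(1) unfolding C_def V_def by auto
    then show "X \<in> insert C (V // R - {K a, K b})"
      using x R'_class unfolding V_def quotient_def K_def by auto
  next
    fix X assume X: "X \<in> insert C (V // R - {K a, K b})"
    show "X \<in> V // R'"
    proof (cases "X = C")
      case True
      then show ?thesis
        using R'_class[OF a] in_K[OF a] a unfolding quotient_def V_def C_def by auto
    next
      case False
      then obtain x where x: "x \<in> V" "X = K x" "K x \<noteq> K a" "K x \<noteq> K b"
        using X unfolding quotient_def K_def by auto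
      then have "x \<notin> C" using K_eq[of x a] K_eq[of x b] unfolding C_def by auto
      then show ?thesis using x R'_class unfolding quotient_def V_def by auto
    qed
  qed
  moreover have "C \<notin> V // R"
  proof
    assume "C \<in> V // R"
    then obtain x where "C = K x" unfolding quotient_def K_def by auto
    then have "K a = C" "K b = C" using K_eq in_K a b unfolding C_def by auto
    then show False using ab in_K[OF b] unfolding K_def R_def by auto
  qed
  moreover have "K a \<in> V // R" "K b \<in> V // R" "K a \<noteq> K b"
    using a b ab in_K[OF b] unfolding quotient_def V_def K_def R_def by auto
  moreover have "finite (V // R)" unfolding V_def by (rule finite_quotient) (auto simp: R_def)
  moreover have "card {K a, K b} \<le> card (V // R)" by (rule card_mono) (use calculation in auto)
  ultimately show ?thesis
    unfolding V_def[symmetric] R_def[symmetric] R'_def[symmetric] by (simp add: card_Diff_subset)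
qed

lemma simple_graphD:
  assumes "simple_graph n es" "e \<in> set es"
  shows "fst e < n" "snd e < n" "fst e \<noteq> snd e"
  using assms unfolding simple_graph_def by auto

lemma adj_mono: "set xs \<subseteq> set ys \<Longrightarrow> adj xs \<subseteq> adj ys"
  unfolding adj_def by auto

lemma adj_snoc: "adj (xs @ [(a, b)]) = adj xs \<union> {(a, b), (b, a)}"
  unfolding adj_def by auto

lemma sym_adj: "sym (adj xs)"
  unfolding adj_def sym_def by auto

lemma adj_take_iff:
  assumes "j \<le> length es"
  shows "(u, v) \<in> adj (take j es) \<longleftrightarrow> (\<exists>i<j. es ! i = (u, v) \<or> es ! i = (v, u))"
  using assms unfolding adj_def by (auto simp: in_set_conv_nth)

text \<open>Otherwise a path between the ends of the edge closes a cycle with it, or the edge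
  duplicates an earlier one.\<close>
lemma forest_edge_joins_components:
  assumes sg: "simple_graph n es" and sf: "spanning_forest_prefix n es k" and j: "j < k"
  shows "(fst (es ! j), snd (es ! j)) \<notin> (adj (take j es))\<^sup>*"
proof
  define a where "a = fst (es ! j)"
  define b where "b = snd (es ! j)"
  have k: "k \<le> length es" and acyclic: "\<not> has_cycle (take k es)"
    using sf unfolding spanning_forest_prefix_def by auto
  have ej: "es ! j = (a, b)" unfolding a_def b_def by simp
  have ab: "a \<noteq> b" using simple_graphD(3)[OF sg nth_mem, of j] j k unfolding a_def b_def by simp
  assume "(fst (es ! j), snd (es ! j)) \<in> (adj (take j es))\<^sup>*"
  then obtain vs where vs: "vs \<noteq> []" "hd vs = a" "last vs = b" "distinct vs"
    "successively (\<lambda>x y. (x, y) \<in> adj (take j es)) vs"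
    using rtrancl_distinct_path unfolding a_def b_def by metis
  have "length vs \<noteq> 1" using vs ab by (cases vs) auto
  moreover have "length vs > 0" using vs(1) by simp
  ultimately consider "length vs = 2" | "length vs \<ge> 3" by linarith
  then show False
  proof cases
    case 1
    then have "(a, b) \<in> adj (take j es)"
      using successively_nth[OF vs(5), of 0] vs(1-3) by (simp add: hd_conv_nth last_conv_nth)
    then obtain i where i: "i < j" "es ! i = (a, b) \<or> es ! i = (b, a)"
      using adj_take_iff[of j es] j k by auto
    then have "map (\<lambda>(i, j). {i, j}) es ! i = map (\<lambda>(i, j). {i, j}) es ! j"
      using j k ej by auto
    moreover have "distinct (map (\<lambda>(i, j). {i, j}) es)" using sg unfolding simple_graph_def by auto
    ultimately show False using i j k nth_eq_iff_index_eq[of "map (\<lambda>(i, j). {i, j}) es" i j] by simp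
  next
    case 2
    have "has_cycle (take k es)" unfolding has_cycle_def
    proof (intro exI[of _ vs] conjI allI impI)
      fix i assume i: "i < length vs"
      show "(vs ! i, vs ! ((i + 1) mod length vs)) \<in> adj (take k es)"
      proof (cases "Suc i < length vs")
        case True
        then have "(vs ! i, vs ! Suc i) \<in> adj (take j es)" using successively_nth[OF vs(5)] by auto
        moreover have "adj (take j es) \<subseteq> adj (take k es)"
          using j by (intro adj_mono set_take_subset_set_take) auto
        ultimately show ?thesis using True by auto
      next
        case False
        then have "i = length vs - 1" using i by simp
        then have "vs ! i = b" "vs ! ((i + 1) mod length vs) = a"
          using vs(1-3) by (auto simp: last_conv_nth hd_conv_nth)
        moreover have "(a, b) \<in> set (take k es)"
          using j k ej by (metis in_set_conv_nth length_take min.absorb2 nth_take)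
        ultimately show ?thesis unfolding adj_def by auto
      qed
    qed (use vs 2 in auto)
    then show False using acyclic by simp
  qed
qed

lemma card_components_forest_prefix:
  assumes sg: "simple_graph n es" and sf: "spanning_forest_prefix n es k" and j: "j \<le> k"
  shows "card ({0..<n} // conn_rel n (take j es)) + j = n"
  using j
proof (induction j)
  case 0
  have "{0..<n} // conn_rel n (take 0 es) = (\<lambda>x. {x}) ` {0..<n}"
    unfolding quotient_def conn_rel_def adj_def by auto
  then show ?case by (simp add: card_image)
next
  case (Suc j)
  have j: "j < length es" using Suc.prems sf unfolding spanning_forest_prefix_def by auto
  define a where "a = fst (es ! j)"
  define b where "b = snd (es ! j)"
  have ab: "a < n" "b < n" using simple_graphD[OF sg nth_mem[OF j]] unfolding a_def b_def by auto
  have nab: "(a, b) \<notin> (adj (take j es))\<^sup>*"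
    using forest_edge_joins_components[OF sg sf] Suc.prems unfolding a_def b_def by auto
  have take_Suc: "take (Suc j) es = take j es @ [(a, b)]"
    using j unfolding a_def b_def by (simp add: take_Suc_conv_app_nth)
  have "card ({0..<n} // conn_rel n (take (Suc j) es)) + 1
      = card ({0..<n} // conn_rel n (take j es))"
    unfolding conn_rel_def take_Suc adj_snoc using card_quotient_add_edge[OF sym_adj ab nab] by simp
  then show ?case using Suc by simp
qed

lemma num_components_spanning_forest:
  assumes sg: "simple_graph n es" and sf: "spanning_forest_prefix n es k"
  shows "num_components n es + k = n"
  using card_components_forest_prefix[OF sg sf order_refl] sf
  unfolding num_components_def spanning_forest_prefix_def by simp

section \<open>Incidence matrices of spanning forests\<close>

lemma incidence_carrier: "incidence n es \<in> carrier_mat n (length es)"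
  unfolding incidence_def by auto

lemma index_incidence:
  assumes "simple_graph n es" "v < n" "l < length es"
  shows "incidence n es $$ (v, l) = of_bool (v = fst (es ! l)) - of_bool (v = snd (es ! l))"
  using assms simple_graphD(3)[OF assms(1) nth_mem[OF assms(3)]] unfolding incidence_def by auto

lemma index_incidence_take:
  assumes "v < n" "l < k" "k \<le> length es"
  shows "incidence n (take k es) $$ (v, l) = incidence n es $$ (v, l)"
  using assms unfolding incidence_def by auto

lemma index_incidence_drop:
  assumes "v < n" "l < length es - k"
  shows "incidence n (drop k es) $$ (v, l) = incidence n es $$ (v, k + l)"
  using assms unfolding incidence_def by auto

text \<open>The forest columns of the incidence matrix are linearly independent: summing the rows
  over the component of \<open>fst (es ! j)\<close> in the first \<open>j\<close> forest edges isolates edge \<open>j\<close>.\<close>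
lemma forest_incidence_independent:
  assumes sg: "simple_graph n es" and sf: "spanning_forest_prefix n es k" and j: "j \<le> k"
    and y: "\<And>v. v < n \<Longrightarrow> (\<Sum>l<j. incidence n es $$ (v, l) * y l) = 0"
  shows "\<forall>l<j. y l = 0"
  using j y
proof (induction j)
  case 0
  then show ?case by simp
next
  case (Suc j)
  have j: "j < length es" using Suc.prems(1) sf unfolding spanning_forest_prefix_def by auto
  define a where "a = fst (es ! j)"
  define S where "S = adj (take j es)"
  have a: "a < n" using simple_graphD(1)[OF sg nth_mem[OF j]] unfolding a_def .
  have not_b: "(a, snd (es ! j)) \<notin> S\<^sup>*"
    using forest_edge_joins_components[OF sg sf] Suc.prems(1) unfolding a_def S_def by auto
  define K where "K = {v. v < n \<and> (a, v) \<in> S\<^sup>*}"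
  have col_sum: "(\<Sum>v\<in>K. incidence n es $$ (v, l))
      = of_bool (fst (es ! l) \<in> K) - of_bool (snd (es ! l) \<in> K)" if l: "l < length es" for l
  proof -
    have "finite K" unfolding K_def by simp
    moreover have "(\<Sum>v\<in>K. incidence n es $$ (v, l))
        = (\<Sum>v\<in>K. of_bool (v = fst (es ! l)) - of_bool (v = snd (es ! l)))"
      by (intro sum.cong) (auto simp: K_def index_incidence[OF sg _ l])
    ultimately show ?thesis by (simp add: sum_subtractf of_bool_def sum.delta)
  qed
  have "(\<Sum>v\<in>K. incidence n es $$ (v, l)) = 0" if l: "l < j" for l
  proof -
    have "(fst (es ! l), snd (es ! l)) \<in> S" "(snd (es ! l), fst (es ! l)) \<in> S"
      using l j unfolding S_def adj_take_iff[OF less_imp_le[OF j]] by auto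
    then have "fst (es ! l) \<in> K \<longleftrightarrow> snd (es ! l) \<in> K"
      using simple_graphD(1,2)[OF sg nth_mem, of l] l j unfolding K_def
      by (auto intro: rtrancl_into_rtrancl)
    then show ?thesis using col_sum l j by simp
  qed
  moreover have "(\<Sum>v\<in>K. incidence n es $$ (v, j)) = 1"
    using col_sum[OF j] a not_b unfolding K_def a_def by auto
  moreover have "0 = (\<Sum>v\<in>K. \<Sum>l<Suc j. incidence n es $$ (v, l) * y l)"
    using Suc.prems(2) unfolding K_def by simp
  moreover have "\<dots> = (\<Sum>l<Suc j. y l * (\<Sum>v\<in>K. incidence n es $$ (v, l)))"
    by (subst sum.swap) (simp add: sum_distrib_left mult.commute)
  ultimately have yj: "y j = 0" by simp
  then have "\<forall>l<j. y l = 0" using Suc by auto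
  then show ?case using yj less_Suc_eq by auto
qed

lemma forest_path_in_column_span:
  assumes sg: "simple_graph n es" and sf: "spanning_forest_prefix n es k"
    and uv: "(u, v) \<in> (adj (take k es))\<^sup>*"
  shows "\<exists>y. \<forall>x<n. (\<Sum>l<k. incidence n es $$ (x, l) * y l) = of_bool (x = u) - of_bool (x = v)"
  using uv
proof (induction rule: rtrancl_induct)
  case base
  then show ?case by (intro exI[of _ "\<lambda>_. 0"]) auto
next
  case (step p q)
  obtain y where y: "\<And>x. x < n \<Longrightarrow> (\<Sum>l<k. incidence n es $$ (x, l) * y l)
      = of_bool (x = u) - of_bool (x = p)"
    using step.IH by blast
  have k: "k \<le> length es" using sf unfolding spanning_forest_prefix_def by auto
  obtain i where i: "i < k" "es ! i = (p, q) \<or> es ! i = (q, p)"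
    using step.hyps(2) adj_take_iff[OF k] by auto
  txt \<open>Walk along the forest edge \<open>i\<close> in the direction from \<open>p\<close> to \<open>q\<close>.\<close>
  define \<sigma> where "\<sigma> = (if es ! i = (p, q) then 1 else -1 :: real)"
  have "p \<noteq> q" using i k simple_graphD(3)[OF sg nth_mem, of i] by auto
  have \<sigma>_col: "\<sigma> * incidence n es $$ (x, i) = of_bool (x = p) - of_bool (x = q)" if x: "x < n" for x
  proof (cases "es ! i = (p, q)")
    case True
    then show ?thesis using x i k by (simp add: \<sigma>_def index_incidence[OF sg])
  next
    case False
    then have "es ! i = (q, p)" using i(2) by simp
    then show ?thesis using x i k \<open>p \<noteq> q\<close> by (simp add: \<sigma>_def index_incidence[OF sg])
  qed
  show ?case
  proof (intro exI[of _ "\<lambda>l. y l + (if l = i then \<sigma> else 0)"] allI impI)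
    fix x assume x: "x < n"
    have "(\<Sum>l<k. incidence n es $$ (x, l) * (y l + (if l = i then \<sigma> else 0)))
        = (\<Sum>l<k. incidence n es $$ (x, l) * y l) + \<sigma> * incidence n es $$ (x, i)"
      using i(1) by (simp add: distrib_left sum.distrib if_distrib[of "\<lambda>z. _ * z"] cong: if_cong)
    then show "(\<Sum>l<k. incidence n es $$ (x, l) * (y l + (if l = i then \<sigma> else 0)))
        = of_bool (x = u) - of_bool (x = q)"
      using y[OF x] \<sigma>_col[OF x] by simp
  qed
qed

lemma forest_gram_inverse:
  assumes sg: "simple_graph n es" and sf: "spanning_forest_prefix n es k"
  defines "EF \<equiv> incidence n (take k es)"
  obtains G where "mat_inverse (transpose_mat EF * EF) = Some G" "G \<in> carrier_mat k k"
    "G * (transpose_mat EF * EF) = 1\<^sub>m k"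
proof -
  have k: "k \<le> length es" using sf unfolding spanning_forest_prefix_def by simp
  have EF: "EF \<in> carrier_mat n k" unfolding EF_def using incidence_carrier[of n "take k es"] k by simp
  define Le where "Le = transpose_mat EF * EF"
  have Le: "Le \<in> carrier_mat k k" unfolding Le_def using EF by auto
  have "det Le \<noteq> 0"
  proof
    assume "det Le = 0"
    then obtain y where y: "y \<in> carrier_vec k" "y \<noteq> 0\<^sub>v k" "Le *\<^sub>v y = 0\<^sub>v k"
      using det_0_iff_vec_prod_zero[OF Le] by auto
    txt \<open>\<open>\<parallel>E\<^sub>F y\<parallel>\<^sup>2 = y \<bullet> L\<^sub>e y = 0\<close>, and the forest columns are independent.\<close>
    have "(EF *\<^sub>v y) \<bullet> (EF *\<^sub>v y) = (transpose_mat EF *\<^sub>v (EF *\<^sub>v y)) \<bullet> y"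
      using transpose_vec_mult_scalar[OF EF y(1), of "EF *\<^sub>v y"] EF y(1) by simp
    also have "\<dots> = 0" using y EF unfolding Le_def by simp
    finally have "EF *\<^sub>v y = 0\<^sub>v n"
      using conjugate_square_eq_0_vec[OF mult_mat_vec_carrier[OF EF y(1)]] by simp
    then have "(\<Sum>l<k. incidence n es $$ (v, l) * y $ l) = 0" if "v < n" for v
      using arg_cong[where f = "\<lambda>x. x $ v"] index_mult_mat_vec_sum[OF EF y(1) that] that
      by (simp add: EF_def index_incidence_take[OF that _ k])
    then have "y = 0\<^sub>v k"
      using forest_incidence_independent[OF sg sf order_refl, of "\<lambda>l. y $ l"] y(1)
      by (intro eq_vecI) auto
    then show False using y(2) by simp
  qed
  then have "Le \<in> Units (ring_mat TYPE(real) k ())" by (rule det_non_zero_imp_unit[OF Le])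
  then obtain G where "mat_inverse Le = Some G"
    using mat_inverse(1)[OF Le, of "()"] by (cases "mat_inverse Le") auto
  then show ?thesis using that mat_inverse(2)[OF Le] unfolding Le_def by auto
qed

lemma forest_incidence_spans_incidence:
  assumes sg: "simple_graph n es" and sf: "spanning_forest_prefix n es k"
  obtains Y where "Y \<in> carrier_mat k (length es - k)"
    "incidence n (take k es) * Y = incidence n (drop k es)"
proof -
  have k: "k \<le> length es" using sf unfolding spanning_forest_prefix_def by simp
  have "\<exists>y. \<forall>x<n. (\<Sum>l<k. incidence n es $$ (x, l) * y l) = incidence n es $$ (x, k + j)"
    if j: "j < length es - k" for j
  proof -
    have kj: "k + j < length es" using j by simp
    define u where "u = fst (es ! (k + j))"
    define v where "v = snd (es ! (k + j))"
    have uv: "u < n" "v < n" using simple_graphD[OF sg nth_mem[OF kj]] unfolding u_def v_def by auto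
    txt \<open>The ends of a cycle edge are connected in the whole graph, hence in the forest.\<close>
    have "(u, v) \<in> conn_rel n es"
      using uv nth_mem[OF kj] unfolding conn_rel_def adj_def u_def v_def by auto
    then have "(u, v) \<in> (adj (take k es))\<^sup>*"
      using sf unfolding spanning_forest_prefix_def conn_rel_def by auto
    then show ?thesis
      using forest_path_in_column_span[OF sg sf] index_incidence[OF sg _ kj] unfolding u_def v_def
      by simp
  qed
  then obtain ys where ys: "\<And>j x. j < length es - k \<Longrightarrow> x < n \<Longrightarrow>
      (\<Sum>l<k. incidence n es $$ (x, l) * ys j l) = incidence n es $$ (x, k + j)"
    by metis
  define Y where "Y = mat k (length es - k) (\<lambda>(l, j). ys j l)"
  have "incidence n (take k es) * Y = incidence n (drop k es)"
  proof (intro eq_matI)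
    fix x j assume "x < dim_row (incidence n (drop k es))" "j < dim_col (incidence n (drop k es))"
    then have xj: "x < n" "j < length es - k" using incidence_carrier[of n "drop k es"] by auto
    have "(incidence n (take k es) * Y) $$ (x, j)
        = (\<Sum>l<k. incidence n (take k es) $$ (x, l) * Y $$ (l, j))"
      by (rule index_mult_mat_sum) (use incidence_carrier[of n "take k es"] k xj in \<open>auto simp: Y_def\<close>)
    also have "\<dots> = (\<Sum>l<k. incidence n es $$ (x, l) * ys j l)"
      using xj k by (intro sum.cong) (auto simp: Y_def index_incidence_take)
    also have "\<dots> = incidence n (drop k es) $$ (x, j)"
      using ys[OF xj(2,1)] index_incidence_drop[OF xj] by simp
    finally show "(incidence n (take k es) * Y) $$ (x, j) = incidence n (drop k es) $$ (x, j)" .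
  qed (use incidence_carrier[of n "drop k es"] incidence_carrier[of n "take k es"] k in
      \<open>auto simp: Y_def\<close>)
  then show ?thesis using that[of Y] unfolding Y_def by auto
qed

lemma incidence_forest_mult_R_mat:
  assumes sg: "simple_graph n es" and sf: "spanning_forest_prefix n es k"
  shows "incidence n (take k es) * R_mat n es k = incidence n es"
proof -
  define m where "m = length es"
  define EF where "EF = incidence n (take k es)"
  define EC where "EC = incidence n (drop k es)"
  have k: "k \<le> m" using sf unfolding spanning_forest_prefix_def m_def by simp
  have EF: "EF \<in> carrier_mat n k" unfolding EF_def using incidence_carrier[of n "take k es"] k m_def by simp
  have EC: "EC \<in> carrier_mat n (m - k)" unfolding EC_def m_def using incidence_carrier[of n "drop k es"] by simp
  obtain G where inv: "mat_inverse (transpose_mat EF * EF) = Some G" and G: "G \<in> carrier_mat k k"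
    and G_inv: "G * (transpose_mat EF * EF) = 1\<^sub>m k"
    using forest_gram_inverse[OF sg sf] unfolding EF_def by blast
  obtain Y where Y: "Y \<in> carrier_mat k (m - k)" and EFY: "EF * Y = EC"
    using forest_incidence_spans_incidence[OF sg sf] unfolding EF_def EC_def m_def by blast
  define X where "X = G * transpose_mat EF * EC"
  txt \<open>The block \<open>X = L\<^sub>e(F)\<^sup>-\<^sup>1 E\<^sub>F\<^sup>T E\<^sub>C\<close> of \<open>R\<close> equals any solution \<open>Y\<close> of \<open>E\<^sub>F Y = E\<^sub>C\<close>.\<close>
  have "X = (G * transpose_mat EF * EF) * Y"
    unfolding X_def EFY[symmetric] using G EF Y by (intro assoc_mult_mat[symmetric]) auto
  also have "G * transpose_mat EF * EF = G * (transpose_mat EF * EF)"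
    using G EF by (intro assoc_mult_mat) auto
  finally have X: "X = Y" using G_inv Y by simp
  have "R_mat n es k = mat k m (\<lambda>(i, j). if j < k then (if i = j then 1 else 0) else X $$ (i, j - k))"
    unfolding R_mat_def Let_def EF_def[symmetric] EC_def[symmetric] m_def[symmetric] inv X_def option.sel ..
  then have R: "R_mat n es k
      = mat k m (\<lambda>(i, j). if j < k then (if i = j then 1 else 0) else Y $$ (i, j - k))"
    unfolding X .
  show ?thesis
    unfolding EF_def[symmetric]
  proof (intro eq_matI)
    fix v j assume "v < dim_row (incidence n es)" "j < dim_col (incidence n es)"
    then have vj: "v < n" "j < m" using incidence_carrier[of n es] m_def by auto
    have "(EF * R_mat n es k) $$ (v, j)
        = (\<Sum>l<k. EF $$ (v, l) * (if j < k then of_bool (l = j) else Y $$ (l, j - k)))"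
      using index_mult_mat_sum[OF EF _ vj, of "R_mat n es k"] vj by (auto simp: R intro!: sum.cong)
    also have "\<dots> = incidence n es $$ (v, j)"
    proof (cases "j < k")
      case True
      then show ?thesis
        using vj k by (simp add: EF_def index_incidence_take m_def of_bool_def
            if_distrib[of "\<lambda>x. _ * x"] cong: if_cong)
    next
      case False
      then have "j - k < m - k" using vj by auto
      then have "(\<Sum>l<k. EF $$ (v, l) * Y $$ (l, j - k)) = EC $$ (v, j - k)"
        using index_mult_mat_sum[OF EF Y vj(1)] EFY by simp
      then show ?thesis using False vj by (simp add: EC_def index_incidence_drop m_def)
    qed
    finally show "(EF * R_mat n es k) $$ (v, j) = incidence n es $$ (v, j)" .
  qed (use EF in \<open>auto simp: incidence_def R_mat_def Let_def m_def\<close>)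
qed

lemma laplacian_forest_factorization:
  assumes sg: "simple_graph n es" and sf: "spanning_forest_prefix n es k"
    and w: "length w = length es"
  defines "EF \<equiv> incidence n (take k es)" and "R \<equiv> R_mat n es k"
  shows "laplacian n es w = EF * (R * weight_mat w * transpose_mat R) * transpose_mat EF"
proof -
  define m where "m = length es"
  have EF: "EF \<in> carrier_mat n k"
    unfolding EF_def using incidence_carrier[of n "take k es"] sf
    unfolding spanning_forest_prefix_def by simp
  have R: "R \<in> carrier_mat k m" unfolding R_def R_mat_def Let_def m_def by simp
  have W: "weight_mat w \<in> carrier_mat m m" using weight_mat_carrier[of w] w m_def by simp
  have "laplacian n es w = (EF * R) * weight_mat w * transpose_mat (EF * R)"
    unfolding laplacian_def EF_def R_def incidence_forest_mult_R_mat[OF sg sf] ..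
  also have "transpose_mat (EF * R) = transpose_mat R * transpose_mat EF" by (rule transpose_mult[OF EF R])
  also have "(EF * R) * weight_mat w * (transpose_mat R * transpose_mat EF)
      = EF * (R * weight_mat w * transpose_mat R) * transpose_mat EF"
    using EF R W
    by (simp add: assoc_mult_mat[of _ n k _ m _ m] assoc_mult_mat[of _ k m _ m _ k]
        assoc_mult_mat[of _ n k _ k _ n] assoc_mult_mat[of _ k m _ m _ n] assoc_mult_mat[of _ m m _ k _ n]
        assoc_mult_mat[of _ n m _ m _ k] assoc_mult_mat[of _ n m _ k _ n] assoc_mult_mat[of _ k m _ k _ n]
        assoc_mult_mat[of EF n k "R * weight_mat w" m "transpose_mat R * transpose_mat EF" n]
        assoc_mult_mat[of R k m "weight_mat w" m "transpose_mat R * transpose_mat EF" n])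
  finally show ?thesis .
qed

theorem corollary2:
  fixes n k c n_pos n_neg n_zero :: nat and es :: "(nat \<times> nat) list" and w :: "real list"
  assumes "simple_graph n es"
    and "length w = length es" and "\<forall>x \<in> set w. x \<noteq> 0"
    and "c = num_components n es"
    and "num_pos_eigs (laplacian n es w) = n_pos"
    and "num_neg_eigs (laplacian n es w) = n_neg"
    and "num_zero_eigs (laplacian n es w) = n_zero"
    and "spanning_forest_prefix n es k"
  shows "num_pos_eigs (R_mat n es k * weight_mat w * transpose_mat (R_mat n es k)) = n_pos
       \<and> num_neg_eigs (R_mat n es k * weight_mat w * transpose_mat (R_mat n es k)) = n_neg
       \<and> num_zero_eigs (R_mat n es k * weight_mat w * transpose_mat (R_mat n es k)) = n_zero - c"
proof -
  note sg = assms(1) and sf = assms(8)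
  define EF where "EF = incidence n (take k es)"
  define R where "R = R_mat n es k"
  have EF: "EF \<in> carrier_mat n k"
    unfolding EF_def using incidence_carrier[of n "take k es"] sf
    unfolding spanning_forest_prefix_def by simp
  have R: "R \<in> carrier_mat k (length es)" unfolding R_def R_mat_def Let_def by simp
  have W: "weight_mat w \<in> carrier_mat (length es) (length es)" using weight_mat_carrier[of w] assms(2) by simp
  obtain G where "G \<in> carrier_mat k k" "G * (transpose_mat EF * EF) = 1\<^sub>m k"
    using forest_gram_inverse[OF sg sf] unfolding EF_def by blast
  from inertia_congruence_full_column_rank[OF EF _ symmetric_congruence[OF R W] this]
    laplacian_forest_factorization[OF sg sf assms(2)] W R
  have "num_pos_eigs (laplacian n es w) = num_pos_eigs (R * weight_mat w * transpose_mat R)"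
    "num_neg_eigs (laplacian n es w) = num_neg_eigs (R * weight_mat w * transpose_mat R)"
    "num_zero_eigs (laplacian n es w) + k = num_zero_eigs (R * weight_mat w * transpose_mat R) + n"
    unfolding EF_def R_def by auto
  then show ?thesis
    using assms(4-7) num_components_spanning_forest[OF sg sf] unfolding R_def by auto
qed

end
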